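(* Let $0<\beta_1<\beta_2$, let $g_{\mathrm{Foot},\beta_1,\beta_2}$ be the football soliton of the context, written on $S^2\setminus\{N,S\}$ as $g=\frac{1}{2\varphi(\tau)}d\tau\otimes d\tau+2\varphi(\tau)d\theta\otimes d\theta$ with $\tau\in(0,\beta_1+\beta_2)$, and let $a=a(\beta_1,\beta_2)$ be as in the context. Set $u=a(\beta_1+\beta_2-\tau)\in[0,a(\beta_1+\beta_2)]$ and regard $\varphi$ as a function of $u$. Then for every $L>0$ and every integer $k\ge0$, $$\frac{a}{\beta_2}\varphi(u)\longrightarrow\frac{e^u-1}{e^u}$$ uniformly in $C^k([0,L])$ as $\beta_1/\beta_2\to0$ (considering only $(\beta_1,\beta_2)$ with $L<a(\beta_1+\beta_2)$).
   Context: Regard $S^2=\mathbb{C}\cup\{\infty\}$ as the Riemann sphere with $N=\{z=0\}$, $S=\{z=\infty\}$, $z=|z|e^{i\theta}$. For $0<\beta_1<\beta_2$, the football soliton $g_{\mathrm{Foot},\beta_1,\beta_2}$ is the unique Riemannian metric on $S^2\setminus\{N,S\}$, compatible with the complex structure, with conical singularities of angle $2\pi\beta_1$ at $N$ and $2\pi\beta_2$ at $S$, of area $2\pi(\beta_1+\beta_2)$, whose Kähler form $\omega$ satisfies $\mathrm{Ric}\,\omega=\omega-\mathcal{L}_X\omega+2\pi(1-\beta_1)\delta_N+2\pi(1-\beta_2)\delta_S$ for a gradient vector field $X$. It is rotationally symmetric: $\omega=\sqrt{-1}\partial\bar\partial f(s)$ on $\mathbb{C}^*$ with $s=\log|z|^2$,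 $f$ strictly convex; $\tau=f'(s)$ (normalized so $\tau\in(0,\beta_1+\beta_2)$, $\tau\to0$ at $N$) and $\varphi(\tau)=f''(s)$. The number $a=a(\beta_1,\beta_2)$ is the unique element of $(0,1/\beta_1)$ with $a\beta_1-1+(a\beta_2+1)e^{-a(\beta_1+\beta_2)}=0$. *)

theory Defs
  imports "HOL-Analysis.Analysis"
begin

definition football_a :: "real \<Rightarrow> real \<Rightarrow> real" where
  "football_a b1 b2 = (THE a. 0 < a \<and> a < 1 / b1 \<and>
      a * b1 - 1 + (a * b2 + 1) * exp (- a * (b1 + b2)) = 0)"

text \<open>The rotationally symmetric soliton equation
  Ric w = w - L_X w reduces (with d/ds = phi d/dtau) to the linear ODE
  phi'(tau) = a phi(tau) - tau + b1, with phi(0) = phi(b1+b2) = 0,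
  phi'(0) = b1, phi'(b1+b2) = -b2 (cone angles), whose solution is the
  closed form below (its vanishing at tau = b1+b2 is exactly the equation
  defining a).\<close>
definition football_phi :: "real \<Rightarrow> real \<Rightarrow> real \<Rightarrow> real" where
  "football_phi b1 b2 \<tau> =
     (let a = football_a b1 b2 in
        ((a * b1 - 1) * exp (a * \<tau>) + a * (\<tau> - b1) + 1) / a\<^sup>2)"

definition football_phi_u :: "real \<Rightarrow> real \<Rightarrow> real \<Rightarrow> real" where
  "football_phi_u b1 b2 u =
     football_phi b1 b2 (b1 + b2 - u / football_a b1 b2)"

end

theory Submission
  imports Defs
begin

text \<open>Solving the soliton ODE explicitly gives
  \<open>a/b2 \<cdot> \<phi>(u) = (1 - exp(-u)) + (1 - exp(-u) - u)/(a b2)\<close>, so every derivative of the error is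
  bounded by \<open>(2 + L)/(a b2)\<close> on \<open>[0, L]\<close>, and it remains to see \<open>a b2 \<rightarrow> \<infinity>\<close> as \<open>b1/b2 \<rightarrow> 0\<close>.
  Up to the factor \<open>-exp(-a (b1 + b2))\<close>, the equation defining \<open>a\<close> reads \<open>H(a) = 0\<close> with
  \<open>H(x) = exp(x (b1 + b2)) (1 - x b1) - 1 - x b2\<close>. Since \<open>H(0) = H'(0) = 0\<close> and \<open>H''\<close> vanishes
  only once, two applications of Rolle's theorem show that \<open>a\<close> is the only positive zero of \<open>H\<close>;
  as \<open>H\<close> is positive on \<open>(0, (b2 - b1)/(b1 (b1 + b2)))\<close> and negative at \<open>1/b1\<close>, \<open>a\<close> lies beyond
  that interval, which forces \<open>a b2 \<rightarrow> \<infinity>\<close>.\<close>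

lemma Rolle_zero_of_derivative:
  fixes f f' :: "real \<Rightarrow> real"
  assumes deriv: "\<And>x. (f has_real_derivative f' x) (at x)" and "a < b" "f a = f b"
  obtains c where "a < c" "c < b" "f' c = 0"
proof -
  have "continuous_on {a..b} f"
    using deriv DERIV_isCont by (blast intro: continuous_at_imp_continuous_on)
  moreover have "\<And>x. f differentiable (at x)"
    using deriv real_differentiable_def by blast
  ultimately obtain c where "a < c" "c < b" "DERIV f c :> 0"
    using Rolle[of a b f] assms by blast
  then show thesis
    using that by (metis DERIV_unique deriv)
qed

lemma positive_zero_unique_if_second_derivative_zero_unique:
  fixes f f' f'' :: "real \<Rightarrow> real"
  assumes f': "\<And>x. (f has_real_derivative f' x) (at x)"
    and f'': "\<And>x. (f' has_real_derivative f'' x) (at x)"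
    and "f 0 = 0" "f' 0 = 0"
    and f''_zero_unique: "\<And>s t. f'' s = 0 \<Longrightarrow> f'' t = 0 \<Longrightarrow> s = t"
    and "0 < x" "0 < z" "f x = 0" "f z = 0"
  shows "x = z"
proof -
  have False if "0 < x" "x < z" "f x = 0" "f z = 0" for x z
  proof -
    obtain c1 where c1: "0 < c1" "c1 < x" "f' c1 = 0"
      using Rolle_zero_of_derivative[OF f' \<open>0 < x\<close>] \<open>f 0 = 0\<close> \<open>f x = 0\<close> by auto
    obtain c2 where c2: "x < c2" "c2 < z" "f' c2 = 0"
      using Rolle_zero_of_derivative[OF f' \<open>x < z\<close>] \<open>f x = 0\<close> \<open>f z = 0\<close> by auto
    obtain d1 where "d1 < c1" "f'' d1 = 0"
      using Rolle_zero_of_derivative[OF f'' \<open>0 < c1\<close>] \<open>f' 0 = 0\<close> \<open>f' c1 = 0\<close> by auto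
    moreover obtain d2 where "c1 < d2" "f'' d2 = 0"
      using Rolle_zero_of_derivative[OF f'', of c1 c2] c1 c2 by auto
    ultimately show False
      using f''_zero_unique[of d1 d2] by simp
  qed
  then show ?thesis
    using assms(6-9) by (cases x z rule: linorder_cases) auto
qed

definition football_H :: "real \<Rightarrow> real \<Rightarrow> real \<Rightarrow> real" where
  "football_H b1 b2 x = exp (x * (b1 + b2)) * (1 - x * b1) - 1 - x * b2"

lemma football_H_has_real_derivative:
  "(football_H b1 b2 has_real_derivative
     exp (x * (b1 + b2)) * (b2 - x * b1 * (b1 + b2)) - b2) (at x)"
  unfolding football_H_def
  by (rule derivative_eq_intros refl | simp)+ (simp add: algebra_simps)

lemma football_H_derivative_has_real_derivative:
  "((\<lambda>x. exp (x * (b1 + b2)) * (b2 - x * b1 * (b1 + b2)) - b2) has_real_derivative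
     (b1 + b2) * exp (x * (b1 + b2)) * (b2 - b1 - x * b1 * (b1 + b2))) (at x)"
  by (rule derivative_eq_intros refl | simp)+ (simp add: algebra_simps)

lemma football_a_equation_iff_football_H:
  "a * b1 - 1 + (a * b2 + 1) * exp (- a * (b1 + b2)) = 0 \<longleftrightarrow> football_H b1 b2 a = 0"
proof -
  have "a * b1 - 1 + (a * b2 + 1) * exp (- a * (b1 + b2))
      = - football_H b1 b2 a * exp (- a * (b1 + b2))"
    unfolding football_H_def by (simp add: algebra_simps flip: exp_add)
  then show ?thesis by simp
qed

lemma football_H_positive_zero_unique:
  assumes "0 < b1" "b1 < b2" "0 < x" "0 < z"
    and "football_H b1 b2 x = 0" "football_H b1 b2 z = 0"
  shows "x = z"
proof (rule positive_zero_unique_if_second_derivative_zero_unique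
    [OF football_H_has_real_derivative football_H_derivative_has_real_derivative])
  fix s t
  assume "(b1 + b2) * exp (s * (b1 + b2)) * (b2 - b1 - s * b1 * (b1 + b2)) = 0"
    and "(b1 + b2) * exp (t * (b1 + b2)) * (b2 - b1 - t * b1 * (b1 + b2)) = 0"
  then have "b2 - b1 - s * b1 * (b1 + b2) = 0" "b2 - b1 - t * b1 * (b1 + b2) = 0"
    using assms(1,2) by auto
  then have "s * (b1 * (b1 + b2)) = t * (b1 * (b1 + b2))"
    by (simp add: algebra_simps)
  then show "s = t"
    using assms(1,2) by simp
qed (use assms in \<open>simp_all add: football_H_def\<close>)

lemma mult_lt_one_if_mult_sum_lt_diff:
  fixes b1 b2 y :: real
  assumes "0 < b1" "b1 < b2" "y * (b1 + b2) * b1 < b2 - b1"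
  shows "y * b1 < 1"
proof -
  have "y * b1 * (b1 + b2) < 1 * (b1 + b2)"
    using assms by (simp add: algebra_simps)
  then show ?thesis
    using assms by (simp add: mult_less_cancel_right)
qed

lemma football_H_pos_near_zero:
  assumes "0 < b1" "b1 < b2" "0 < y" "y * (b1 + b2) * b1 < b2 - b1"
  shows "0 < football_H b1 b2 y"
proof -
  let ?T = "b1 + b2"
  have "y * b1 < 1"
    using mult_lt_one_if_mult_sum_lt_diff assms by blast
  then have "(1 + y * ?T + (y * ?T)\<^sup>2 / 2) * (1 - y * b1) \<le> exp (y * ?T) * (1 - y * b1)"
    using assms by (intro mult_right_mono exp_lower_Taylor_quadratic) auto
  moreover have "(1 + y * ?T + (y * ?T)\<^sup>2 / 2) * (1 - y * b1) - 1 - y * b2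
      = y\<^sup>2 * ?T * ((b2 - b1) - y * ?T * b1) / 2"
    by (simp add: field_simps power2_eq_square)
  moreover have "0 < y\<^sup>2 * ?T * ((b2 - b1) - y * ?T * b1) / 2"
    using assms by (intro divide_pos_pos mult_pos_pos) auto
  ultimately show ?thesis
    unfolding football_H_def by linarith
qed

lemma football_H_at_inverse_b1_neg:
  assumes "0 < b1" "b1 < b2"
  shows "football_H b1 b2 (1 / b1) < 0"
  using assms unfolding football_H_def by (simp add: field_simps)

lemma football_H_zero_between:
  assumes "0 < b1" "b1 < b2" "0 < y" "y * (b1 + b2) * b1 < b2 - b1"
  obtains r where "y < r" "r < 1 / b1" "football_H b1 b2 r = 0"
proof -
  have pos: "0 < football_H b1 b2 y" and neg: "football_H b1 b2 (1 / b1) < 0"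
    using football_H_pos_near_zero[OF assms] football_H_at_inverse_b1_neg[OF assms(1,2)] .
  have "continuous_on UNIV (football_H b1 b2)"
    unfolding football_H_def by (intro continuous_intros)
  then have "isCont (football_H b1 b2) x" for x
    by (simp add: continuous_on_eq_continuous_at)
  moreover have "y * b1 < 1"
    using mult_lt_one_if_mult_sum_lt_diff assms by blast
  then have "y \<le> 1 / b1"
    using assms(1) by (simp add: field_simps)
  ultimately obtain r where "y \<le> r" "r \<le> 1 / b1" "football_H b1 b2 r = 0"
    using IVT2[of "football_H b1 b2" "1 / b1" 0 y] pos neg by auto
  moreover have "r \<noteq> y" "r \<noteq> 1 / b1"
    using calculation pos neg by auto
  ultimately show thesis
    using that by force
qed

lemma football_a_positive_zero_of_football_H:
  assumes "0 < b1" "b1 < b2"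
  shows "0 < football_a b1 b2" "football_H b1 b2 (football_a b1 b2) = 0"
proof -
  define y where "y = (b2 - b1) / (2 * ((b1 + b2) * b1))"
  have "0 < y"
    using assms unfolding y_def by (intro divide_pos_pos) auto
  moreover have "y * (b1 + b2) * b1 = (b2 - b1) / 2"
    using assms unfolding y_def by (simp add: divide_simps)
  ultimately have "0 < y" "y * (b1 + b2) * b1 < b2 - b1"
    using assms by auto
  then obtain r where r: "0 < r" "r < 1 / b1" "football_H b1 b2 r = 0"
    using football_H_zero_between[OF assms] by (metis order.strict_trans)
  have "football_a b1 b2 = r"
    unfolding football_a_def football_a_equation_iff_football_H
    using r football_H_positive_zero_unique[OF assms] by (intro the_equality) auto
  then show "0 < football_a b1 b2" "football_H b1 b2 (football_a b1 b2) = 0"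
    using r by simp_all
qed

lemma football_a_gt:
  assumes "0 < b1" "b1 < b2" "0 < y" "y * (b1 + b2) * b1 < b2 - b1"
  shows "y < football_a b1 b2"
proof -
  obtain r where "y < r" "football_H b1 b2 r = 0"
    using football_H_zero_between[OF assms] by blast
  moreover have "r = football_a b1 b2"
    using football_H_positive_zero_unique[OF assms(1,2)] football_a_positive_zero_of_football_H[OF assms(1,2)]
      calculation assms(3) by simp
  ultimately show ?thesis
    by simp
qed

lemma football_a_mult_b2_gt:
  assumes "0 < b1" "b1 < b2" "0 < M" "b1 * (1 + 2 * M) < b2"
  shows "M < football_a b1 b2 * b2"
proof -
  define y where "y = 2 * M / (b1 + b2)"
  have "y * (b1 + b2) = 2 * M"
    using assms(1,2) by (simp add: y_def)
  then have "0 < y" "y * (b1 + b2) * b1 < b2 - b1"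
    using assms by (simp_all add: y_def algebra_simps)
  then have "y * b2 < football_a b1 b2 * b2"
    using football_a_gt[OF assms(1,2)] assms(1,2) by simp
  moreover have "y * b1 < y * b2"
    using \<open>0 < y\<close> assms(2) by simp
  then have "M < y * b2"
    using \<open>y * (b1 + b2) = 2 * M\<close> by (simp add: algebra_simps)
  ultimately show ?thesis
    by linarith
qed

definition exp_affine :: "real \<Rightarrow> real \<Rightarrow> real \<Rightarrow> real \<Rightarrow> real" where
  "exp_affine p q r v = p + q * exp (- v) + r * v"

lemma deriv_exp_affine: "deriv (exp_affine p q r) = exp_affine r (- q) 0"
proof
  fix v
  have "(exp_affine p q r has_real_derivative exp_affine r (- q) 0 v) (at v)"
    unfolding exp_affine_def by (rule derivative_eq_intros refl | simp)+
  then show "deriv (exp_affine p q r) v = exp_affine r (- q) 0 v"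
    by (rule DERIV_imp_deriv)
qed

lemma higher_deriv_exp_affine:
  "(deriv ^^ j) (exp_affine p q r) =
     exp_affine (if j = 0 then p else if j = 1 then r else 0) ((- 1) ^ j * q) (if j = 0 then r else 0)"
proof (induction j arbitrary: p q r)
  case 0
  then show ?case by simp
next
  case (Suc j)
  have "(deriv ^^ Suc j) (exp_affine p q r) = (deriv ^^ j) (exp_affine r (- q) 0)"
    by (simp only: funpow_Suc_right comp_def deriv_exp_affine)
  then show ?case
    by (simp add: Suc.IH)
qed

lemma exp_affine_diff:
  "exp_affine p q r v - exp_affine p' q' r' v = exp_affine (p - p') (q - q') (r - r') v"
  unfolding exp_affine_def by (simp add: algebra_simps)

lemma abs_exp_affine_le:
  assumes "0 \<le> v" "\<bar>p\<bar> \<le> c" "\<bar>q\<bar> \<le> c" "\<bar>r\<bar> \<le> c"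
  shows "\<bar>exp_affine p q r v\<bar> \<le> c * (2 + v)"
proof -
  have "\<bar>q * exp (- v)\<bar> \<le> \<bar>q\<bar>"
    using assms(1) by (simp add: abs_mult mult_left_le)
  moreover have "\<bar>r * v\<bar> \<le> c * v"
    using assms by (simp add: abs_mult mult_right_mono)
  moreover have "\<bar>p + q * exp (- v) + r * v\<bar> \<le> \<bar>p\<bar> + \<bar>q * exp (- v)\<bar> + \<bar>r * v\<bar>"
    by linarith
  ultimately show ?thesis
    unfolding exp_affine_def using assms(2,3) by argo
qed

lemma one_minus_exp_minus_eq_exp_affine: "(\<lambda>v. (exp v - 1) / exp v) = exp_affine 1 (- 1) 0"
  by (rule ext) (simp add: exp_affine_def exp_minus field_simps)

lemma scaled_football_phi_u_eq_exp_affine: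
  assumes "0 < b1" "b1 < b2"
  defines "c \<equiv> 1 / (football_a b1 b2 * b2)"
  shows "(\<lambda>v. football_a b1 b2 / b2 * football_phi_u b1 b2 v) = exp_affine (1 + c) (- (1 + c)) (- c)"
proof
  fix v
  define a where "a = football_a b1 b2"
  have a: "0 < a" "football_H b1 b2 a = 0"
    using football_a_positive_zero_of_football_H[OF assms(1,2)] by (simp_all add: a_def)
  have "(a * b1 - 1) * exp (a * (b1 + b2 - v / a)) = (a * b1 - 1) * exp (a * (b1 + b2)) * exp (- v)"
    using a(1) by (simp add: algebra_simps flip: exp_add)
  also have "(a * b1 - 1) * exp (a * (b1 + b2)) = - (1 + a * b2)"
    using a(2) by (simp add: football_H_def algebra_simps)
  finally have phi_u: "football_phi_u b1 b2 v = (- (1 + a * b2) * exp (- v) + a * b2 - v + 1) / a\<^sup>2"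
    using a(1) by (simp add: football_phi_u_def football_phi_def a_def[symmetric] algebra_simps)
  have scale: "a / b2 * (X / a\<^sup>2) = c * X" for X
    using a(1) by (simp add: c_def a_def power2_eq_square)
  have "c * (a * b2) = 1"
    using a(1) assms(1,2) by (simp add: c_def a_def)
  then have "c * (- (1 + a * b2) * exp (- v) + a * b2 - v + 1) = exp_affine (1 + c) (- (1 + c)) (- c) v"
    unfolding exp_affine_def by algebra
  then show "football_a b1 b2 / b2 * football_phi_u b1 b2 v = exp_affine (1 + c) (- (1 + c)) (- c) v"
    unfolding phi_u scale a_def[symmetric] .
qed

lemma scaled_football_phi_u_higher_deriv_error_le:
  assumes "0 < b1" "b1 < b2" "0 \<le> u"
  shows "\<bar>(deriv ^^ j) (\<lambda>v. football_a b1 b2 / b2 * football_phi_u b1 b2 v) u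
          - (deriv ^^ j) (\<lambda>v. (exp v - 1) / exp v) u\<bar> \<le> (2 + u) / (football_a b1 b2 * b2)"
proof -
  define c where "c = 1 / (football_a b1 b2 * b2)"
  have "0 < c"
    using football_a_positive_zero_of_football_H(1)[OF assms(1,2)] assms(1,2) by (simp add: c_def)
  have "(- 1) ^ j * (- (1 + c)) - (- 1) ^ j * (- 1) = (- 1) ^ j * (- c)"
    by (simp add: algebra_simps)
  then have "\<bar>(- 1) ^ j * (- (1 + c)) - (- 1) ^ j * (- 1)\<bar> = c"
    using \<open>0 < c\<close> by (simp add: abs_mult power_abs)
  have "(deriv ^^ j) (\<lambda>v. football_a b1 b2 / b2 * football_phi_u b1 b2 v) u
          - (deriv ^^ j) (\<lambda>v. (exp v - 1) / exp v) u
      = exp_affine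
          ((if j = 0 then 1 + c else if j = 1 then - c else 0) - (if j = 0 then 1 else if j = 1 then 0 else 0))
          ((- 1) ^ j * (- (1 + c)) - (- 1) ^ j * (- 1))
          ((if j = 0 then - c else 0) - (if j = 0 then 0 else 0)) u"
    unfolding scaled_football_phi_u_eq_exp_affine[OF assms(1,2)] one_minus_exp_minus_eq_exp_affine
      higher_deriv_exp_affine c_def[symmetric]
    by (rule exp_affine_diff)
  also have "\<bar>\<dots>\<bar> \<le> c * (2 + u)"
    using \<open>0 < c\<close> \<open>\<bar>(- 1) ^ j * (- (1 + c)) - (- 1) ^ j * (- 1)\<bar> = c\<close>
    by (intro abs_exp_affine_le assms(3)) auto
  finally show ?thesis
    by (simp add: c_def)
qed

lemma scaled_football_phi_u_higher_deriv_error_lt: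
  assumes "0 < b1" "b1 < b2" "0 < M" "M < football_a b1 b2 * b2" "0 \<le> u" "u \<le> L"
  shows "\<bar>(deriv ^^ j) (\<lambda>v. football_a b1 b2 / b2 * football_phi_u b1 b2 v) u
          - (deriv ^^ j) (\<lambda>v. (exp v - 1) / exp v) u\<bar> < (2 + L) / M"
proof -
  have "(2 + u) / (football_a b1 b2 * b2) \<le> (2 + L) / (football_a b1 b2 * b2)"
    using assms by (intro divide_right_mono) auto
  also have "\<dots> < (2 + L) / M"
    using assms by (intro divide_strict_left_mono) auto
  finally show ?thesis
    using scaled_football_phi_u_higher_deriv_error_le[OF assms(1,2,5), of j] by linarith
qed

theorem lemma2p3:
  fixes L :: real and k :: nat
  assumes "L > 0"
  shows "\<forall>\<epsilon>>0. \<exists>\<delta>>0. \<forall>b1 b2 :: real.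
           0 < b1 \<and> b1 < b2 \<and> b1 / b2 < \<delta> \<and> L < football_a b1 b2 * (b1 + b2) \<longrightarrow>
           (\<forall>j\<le>k. \<forall>u\<in>{0..L}.
              \<bar>(deriv ^^ j) (\<lambda>v. football_a b1 b2 / b2 * football_phi_u b1 b2 v) u
               - (deriv ^^ j) (\<lambda>v. (exp v - 1) / exp v) u\<bar> < \<epsilon>)"
proof (intro allI impI)
  fix \<epsilon> :: real
  assume "0 < \<epsilon>"
  define M where "M = (2 + L) / \<epsilon>"
  have "0 < M"
    using assms \<open>0 < \<epsilon>\<close> by (simp add: M_def)
  show "\<exists>\<delta>>0. \<forall>b1 b2. 0 < b1 \<and> b1 < b2 \<and> b1 / b2 < \<delta> \<and> L < football_a b1 b2 * (b1 + b2) \<longrightarrow>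
      (\<forall>j\<le>k. \<forall>u\<in>{0..L}.
         \<bar>(deriv ^^ j) (\<lambda>v. football_a b1 b2 / b2 * football_phi_u b1 b2 v) u
          - (deriv ^^ j) (\<lambda>v. (exp v - 1) / exp v) u\<bar> < \<epsilon>)"
  proof (intro exI[of _ "1 / (1 + 2 * M)"] conjI allI impI ballI)
    show "0 < 1 / (1 + 2 * M)"
      using \<open>0 < M\<close> by simp
    fix b1 b2 u :: real and j :: nat
    assume b: "0 < b1 \<and> b1 < b2 \<and> b1 / b2 < 1 / (1 + 2 * M) \<and> L < football_a b1 b2 * (b1 + b2)"
      and u: "u \<in> {0..L}"
    then have "b1 / b2 * (1 + 2 * M) < 1"
      using \<open>0 < M\<close> by (simp add: less_divide_eq)
    then have "b1 * (1 + 2 * M) < b2"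
      using b by (simp add: divide_less_eq)
    then have "M < football_a b1 b2 * b2"
      using football_a_mult_b2_gt \<open>0 < M\<close> b by blast
    then show "\<bar>(deriv ^^ j) (\<lambda>v. football_a b1 b2 / b2 * football_phi_u b1 b2 v) u
        - (deriv ^^ j) (\<lambda>v. (exp v - 1) / exp v) u\<bar> < \<epsilon>"
      using scaled_football_phi_u_higher_deriv_error_lt[of b1 b2 M u L j] b u \<open>0 < M\<close>
      by (simp add: M_def)
  qed
qed

end
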